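(* Let $\Omega>0$ be fixed and for each $\lambda>1/\pi$ let $w^\lambda$ be a maximizer of $\mathcal{E}$ over $K_\lambda(D)$, with associated number $\mu^\lambda=\operatorname{ess\,sup}_{\{w^\lambda<\lambda\}}(Gw^\lambda+\frac{\Omega}{2}|x|^2)$. Let $\psi^\lambda=Gw^\lambda+\frac{\Omega}{2}|x|^2-\mu^\lambda$, $\psi^\lambda_+=\max\{\psi^\lambda,0\}$ and $T(w^\lambda)=\frac12\int_D|\nabla\psi^\lambda_+|^2dx$. Then there is a constant $C$ independent of $\lambda$ such that $T(w^\lambda)\le C$ for all sufficiently large $\lambda$.
   Context: $D$ is the open unit disk in $\mathbb{R}^2$; $G$ is the Green's function of $-\Delta$ in $D$ with zero Dirichlet boundary condition and $Gw(x)=\int_D G(x,y)w(y)dy$. $K_\lambda(D)=\{w\in L^\infty(D):0\le w\le\lambda\text{ a.e.},\ \int_D w=1\}$, $\mathcal{E}(w)=\frac12\int_D\int_D G(x,y)w(x)w(y)dxdy+\frac{\Omega}{2}\int_D|x|^2w(x)dx$; a maximizer is $w^\lambda\in K_\lambda(D)$ with $\mathcal{E}(w^\lambda)=\sup_{K_\lambda(D)}\mathcal{E}$. *)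

theory Defs
  imports "HOL-Analysis.Analysis" "HOL-Probability.Probability"
begin

text \<open>The plane R^2 is identified with the complex numbers; D is the open unit disk.\<close>
definition unit_disk :: "complex set" where
  "unit_disk = ball 0 1"

text \<open>Green's function of -Laplace on the unit disk with zero Dirichlet data:
  G(x,y) = (1/(2 pi)) ln (|1 - x conj y| / |x - y|).\<close>
definition green_disk :: "complex \<Rightarrow> complex \<Rightarrow> real" where
  "green_disk x y = ln (cmod (1 - x * cnj y) / cmod (x - y)) / (2 * pi)"

definition green_op :: "(complex \<Rightarrow> real) \<Rightarrow> complex \<Rightarrow> real" where
  "green_op w x = (LINT y:unit_disk|lebesgue. green_disk x y * w y)"

definition K_set :: "real \<Rightarrow> (complex \<Rightarrow> real) set" where
  "K_set lam = {w. w \<in> borel_measurable lebesgue \<and>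
      (AE x in lebesgue. x \<in> unit_disk \<longrightarrow> 0 \<le> w x \<and> w x \<le> lam) \<and>
      (LINT x:unit_disk|lebesgue. w x) = 1}"

definition energy :: "real \<Rightarrow> (complex \<Rightarrow> real) \<Rightarrow> real" where
  "energy Om w = 1/2 * (LINT x:unit_disk|lebesgue. w x * green_op w x)
      + Om/2 * (LINT x:unit_disk|lebesgue. (cmod x)^2 * w x)"

definition is_maximizer :: "real \<Rightarrow> real \<Rightarrow> (complex \<Rightarrow> real) \<Rightarrow> bool" where
  "is_maximizer Om lam w \<longleftrightarrow> w \<in> K_set lam \<and> (\<forall>v\<in>K_set lam. energy Om v \<le> energy Om w)"

definition mu_val :: "real \<Rightarrow> real \<Rightarrow> (complex \<Rightarrow> real) \<Rightarrow> real" where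
  "mu_val Om lam w = real_of_ereal
     (esssup (restrict_space lebesgue {x\<in>unit_disk. w x < lam})
        (\<lambda>x. ereal (green_op w x + Om/2 * (cmod x)^2)))"

definition psi :: "real \<Rightarrow> real \<Rightarrow> (complex \<Rightarrow> real) \<Rightarrow> complex \<Rightarrow> real" where
  "psi Om lam w x = green_op w x + Om/2 * (cmod x)^2 - mu_val Om lam w"

text \<open>|grad f(x)|^2 for f : R^2 -> R (at points of differentiability; the
  Lipschitz function psi_+ is differentiable a.e., elsewhere we put 0).\<close>
definition grad_sq :: "(complex \<Rightarrow> real) \<Rightarrow> complex \<Rightarrow> real" where
  "grad_sq f x = (if f differentiable (at x)
     then (frechet_derivative f (at x) 1)^2 + (frechet_derivative f (at x) \<i>)^2 else 0)"

definition kinetic :: "real \<Rightarrow> real \<Rightarrow> (complex \<Rightarrow> real) \<Rightarrow> real" where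
  "kinetic Om lam w = 1/2 * (LINT x:unit_disk|lebesgue.
      grad_sq (\<lambda>y. max (psi Om lam w y) 0) x)"

end

theory Submission
  imports Defs
begin

text \<open>
  Since \<open>0 \<le> w \<le> \<lambda>\<close> and \<open>\<integral> w = 1\<close>, the Riesz potential \<open>\<integral> w(y)/|x - y| dy\<close> is
  at most \<open>(1 + 4\<pi>)\<surd>\<lambda>\<close> (bathtub principle: put the mass \<open>\<lambda>\<close> on a disk of radius \<open>1/\<surd>\<lambda>\<close>
  around \<open>x\<close>). Both \<open>G(x,y)\<close> and its difference quotients in \<open>x\<close> are dominated by
  \<open>1/|x - y|\<close>, so \<open>\<psi>\<^sup>\<lambda>\<close> is Lipschitz with constant \<open>O(\<surd>\<lambda>)\<close>.
  By the definition of \<open>\<mu>\<^sup>\<lambda>\<close>, \<open>\<psi>\<^sup>\<lambda> \<le> 0\<close> a.e. on \<open>{w\<^sup>\<lambda> < \<lambda>}\<close>, where \<open>\<nabla>\<psi>\<^sup>\<lambda>\<^sub>+\<close> therefore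
  vanishes; the remaining set \<open>{w\<^sup>\<lambda> = \<lambda>}\<close> has measure at most \<open>1/\<lambda>\<close>. Hence
  \<open>T(w\<^sup>\<lambda>) \<le> O(\<lambda>)\<cdot>(1/\<lambda>) = O(1)\<close>.
\<close>

section \<open>Lebesgue measure of disks and the singularity \<open>1/|x - y|\<close>\<close>

lemma emeasure_lebesgue_cball_complex:
  fixes c :: complex assumes "r \<ge> 0"
  shows "emeasure lebesgue (cball c r) = ennreal (pi * r^2)"
proof -
  have "emeasure lebesgue (cball c r) = emeasure lborel (cball c r)"
    by simp
  also have "\<dots> = ennreal (unit_ball_vol (DIM(complex)) * r ^ DIM(complex))"
    using emeasure_cball[OF assms] by blast
  also have "unit_ball_vol (DIM(complex)) = pi"
    using unit_ball_vol_numeral(1)[of Num.One] by simp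
  finally show ?thesis by simp
qed

lemma emeasure_unit_disk: "emeasure lebesgue unit_disk = ennreal pi"
proof -
  have "emeasure lebesgue (ball (0::complex) 1) = emeasure lborel (ball (0::complex) 1)"
    by simp
  also have "\<dots> = ennreal (unit_ball_vol (DIM(complex)) * 1 ^ DIM(complex))"
    using emeasure_ball[of 1 "0::complex"] by simp
  also have "unit_ball_vol (DIM(complex)) = pi"
    using unit_ball_vol_numeral(1)[of Num.One] by simp
  finally show ?thesis by (simp add: unit_disk_def)
qed

lemma unit_disk_sets [measurable]: "unit_disk \<in> sets lebesgue"
  unfolding unit_disk_def by (simp add: fmeasurableD)

lemma cball_sets_lebesgue [measurable]: "cball (x::complex) r \<in> sets lebesgue"
  by (simp add: fmeasurableD)

lemma lebesgue_measurable_cnj [measurable]: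
  "(\<lambda>y::complex. cnj y) \<in> borel_measurable lebesgue"
  by (rule measurable_completion) (simp add: borel_measurable_continuous_onI)

lemma lebesgue_measurable_id_complex [measurable]:
  "(\<lambda>y::complex. y) \<in> borel_measurable lebesgue"
  by (rule measurable_completion) simp

lemma lebesgue_measurable_green_disk [measurable]:
  "(\<lambda>y. green_disk x y) \<in> borel_measurable lebesgue"
  unfolding green_disk_def by measurable

lemma ex_power2_bracket:
  fixes t :: real assumes "t \<ge> 1"
  shows "\<exists>K::nat. 2^K \<le> t \<and> t < 2^(K+1)"
proof -
  obtain n :: nat where n: "t < 2^n" using real_arch_pow[of 2 t] by auto
  define m where "m = (LEAST m::nat. t < 2^m)"
  have m: "t < 2^m" unfolding m_def by (rule LeastI[of _ n], rule n)
  have "m \<noteq> 0" using m assms by (intro notI) simp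
  then obtain K where K: "m = Suc K" by (cases m) auto
  have "\<not> t < 2^K" using K unfolding m_def by (metis Least_le Suc_n_not_le_n)
  then show ?thesis using m K by (intro exI[of _ K]) auto
qed

text \<open>Dyadic shells: \<open>1/|x - y| \<le> 2\<^sup>k\<^sup>+\<^sup>1/r\<close> on \<open>cball x (r/2\<^sup>k)\<close> minus the next smaller ball.\<close>

lemma inverse_dist_le_dyadic_sum:
  fixes x y :: complex assumes r: "r > 0"
  shows "indicator (cball x r) y * ennreal (1 / cmod (x - y))
     \<le> (\<Sum>k. indicator (cball x (r / 2^k)) y * ennreal (2^(k+1) / r))"
proof (cases "y \<in> cball x r \<and> y \<noteq> x")
  case False
  then show ?thesis by (auto simp: indicator_def)
next
  case True
  define d where "d = cmod (x - y)"
  have d: "0 < d" "d \<le> r" using True by (auto simp: d_def dist_norm)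
  then obtain K :: nat where K: "2^K \<le> r / d" "r / d < 2^(K+1)"
    using ex_power2_bracket[of "r / d"] by auto
  have "d \<le> r / 2^K" using K(1) d by (simp add: field_simps)
  hence inK: "y \<in> cball x (r / 2^K)" by (simp add: dist_norm d_def)
  have "1 / d \<le> 2^(K+1) / r" using K(2) d r by (simp add: field_simps)
  hence "indicator (cball x r) y * ennreal (1 / cmod (x - y))
      \<le> indicator (cball x (r / 2^K)) y * ennreal (2^(K+1) / r)"
    using True inK by (simp add: d_def ennreal_leI)
  also have "\<dots> \<le> (\<Sum>k. indicator (cball x (r / 2^k)) y * ennreal (2^(k+1) / r))"
    using sum_le_suminf[OF summableI, of "{K}"] by simp
  finally show ?thesis .
qed

lemma nn_integral_cball_inverse_dist_le:
  fixes x :: complex assumes r: "r > 0"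
  shows "(\<integral>\<^sup>+ y. indicator (cball x r) y * ennreal (1 / cmod (x - y)) \<partial>lebesgue)
    \<le> ennreal (4 * pi * r)"
proof -
  have shell: "(\<integral>\<^sup>+ y. indicator (cball x (r / 2^k)) y * ennreal (2^(k+1) / r) \<partial>lebesgue)
      = ennreal (2 * pi * r * (1/2)^k)" for k :: nat
  proof -
    have "(\<integral>\<^sup>+ y. indicator (cball x (r / 2^k)) y * ennreal (2^(k+1) / r) \<partial>lebesgue)
       = ennreal (2^(k+1) / r) * ennreal (pi * (r / 2^k)^2)"
      using r by (subst nn_integral_multc)
        (auto simp: mult.commute emeasure_lebesgue_cball_complex simp del: emeasure_completion)
    also have "\<dots> = ennreal (2 * pi * r * (1/2)^k)"
      using r by (simp add: ennreal_mult'[symmetric]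
          field_simps power2_eq_square flip: power_mult power_add)
    finally show ?thesis .
  qed
  have "(\<lambda>k. 2 * pi * r * (1/2::real)^k) sums (2 * pi * r * (1 / (1 - 1/2)))"
    by (intro sums_mult geometric_sums) auto
  hence geom: "(\<lambda>k. ennreal (2 * pi * r * (1/2::real)^k)) sums ennreal (4 * pi * r)"
    using r by (subst sums_ennreal) (auto simp: mult.assoc)
  have "(\<integral>\<^sup>+ y. indicator (cball x r) y * ennreal (1 / cmod (x - y)) \<partial>lebesgue)
     \<le> (\<integral>\<^sup>+ y. (\<Sum>k. indicator (cball x (r / 2^k)) y * ennreal (2^(k+1) / r)) \<partial>lebesgue)"
    by (intro nn_integral_mono inverse_dist_le_dyadic_sum r)
  also have "\<dots> = (\<Sum>k. (\<integral>\<^sup>+ y. indicator (cball x (r / 2^k)) y * ennreal (2^(k+1) / r) \<partial>lebesgue))"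
    by (intro nn_integral_suminf) measurable
  also have "\<dots> = ennreal (4 * pi * r)"
    unfolding shell using geom by (rule sums_unique[symmetric])
  finally show ?thesis .
qed

lemma nn_integral_bounded_density_inverse_dist_le:
  fixes w :: "complex \<Rightarrow> real" and x :: complex
  assumes S [measurable]: "S \<in> sets lebesgue"
    and w [measurable]: "w \<in> borel_measurable lebesgue"
    and w_bounds: "AE y in lebesgue. y \<in> S \<longrightarrow> 0 \<le> w y \<and> w y \<le> lam"
    and w_int: "set_integrable lebesgue S w" and w_mass: "(LINT y:S|lebesgue. w y) = 1"
    and lam: "lam > 0"
  shows "(\<integral>\<^sup>+ y. indicator S y * ennreal (w y / cmod (x - y)) \<partial>lebesgue)
    \<le> ennreal ((1 + 4*pi) * sqrt lam)"
proof -
  define r where "r = 1 / sqrt lam"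
  have r: "r > 0" using lam by (simp add: r_def)
  have split: "AE y in lebesgue. indicator S y * ennreal (w y / cmod (x - y))
      \<le> ennreal lam * (indicator (cball x r) y * ennreal (1 / cmod (x - y)))
        + ennreal (sqrt lam) * (indicator S y * ennreal (w y))"
    using w_bounds
  proof eventually_elim
    case (elim y)
    show ?case
    proof (cases "y \<in> S")
      case True
      with elim have wy: "0 \<le> w y" "w y \<le> lam" by auto
      define d where "d = cmod (x - y)"
      show ?thesis
      proof (cases "d \<le> r")
        case True
        have "w y / d \<le> lam * (1 / d)"
          using wy by (simp add: divide_right_mono d_def)
        hence "ennreal (w y / d) \<le> ennreal lam * ennreal (1 / d)"
          using lam by (simp add: ennreal_mult'[symmetric] ennreal_leI)
        moreover have "y \<in> cball x r" using True by (simp add: d_def dist_norm)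
        ultimately show ?thesis using \<open>y \<in> S\<close>
          by (simp add: d_def) (meson add_increasing2 order.trans zero_le)
      next
        case False
        have "1 < d * sqrt lam" using False lam unfolding r_def by (simp add: field_simps)
        hence "1 / d \<le> sqrt lam" using False r by (simp add: divide_le_eq mult.commute)
        hence "w y / d \<le> sqrt lam * w y" using wy
          by (metis divide_inverse inverse_eq_divide mult.commute mult_left_mono)
        hence "ennreal (w y / d) \<le> ennreal (sqrt lam) * ennreal (w y)"
          using wy by (simp add: ennreal_mult'[symmetric] ennreal_leI)
        thus ?thesis using \<open>y \<in> S\<close>
          by (simp add: d_def) (meson add_increasing order.trans zero_le)
      qed
    qed simp
  qed
  have mass: "(\<integral>\<^sup>+ y. indicator S y * ennreal (w y) \<partial>lebesgue) = 1"
  proof -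
    have "(\<integral>\<^sup>+ y. indicator S y * ennreal (w y) \<partial>lebesgue)
        = (\<integral>\<^sup>+ y. ennreal (indicator S y * w y) \<partial>lebesgue)"
      by (intro nn_integral_cong) (simp add: indicator_def)
    also have "\<dots> = ennreal (\<integral>y. indicator S y * w y \<partial>lebesgue)"
      using w_int w_bounds by (intro nn_integral_eq_integral)
        (auto simp: set_integrable_def indicator_def elim!: eventually_mono)
    finally show ?thesis using w_mass by (simp add: set_lebesgue_integral_def)
  qed
  have "(\<integral>\<^sup>+ y. indicator S y * ennreal (w y / cmod (x - y)) \<partial>lebesgue)
     \<le> (\<integral>\<^sup>+ y. ennreal lam * (indicator (cball x r) y * ennreal (1 / cmod (x - y)))
        + ennreal (sqrt lam) * (indicator S y * ennreal (w y)) \<partial>lebesgue)"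
    by (rule nn_integral_mono_AE[OF split])
  also have "\<dots> = ennreal lam * (\<integral>\<^sup>+ y. indicator (cball x r) y * ennreal (1 / cmod (x - y)) \<partial>lebesgue)
     + ennreal (sqrt lam) * (\<integral>\<^sup>+ y. indicator S y * ennreal (w y) \<partial>lebesgue)"
    by (subst nn_integral_add; (subst nn_integral_cmult)?; (subst nn_integral_cmult)?; measurable?)
  also have "\<dots> \<le> ennreal lam * ennreal (4 * pi * r) + ennreal (sqrt lam) * 1"
    unfolding mass by (intro add_right_mono mult_left_mono nn_integral_cball_inverse_dist_le r) auto
  also have "\<dots> = ennreal ((1 + 4*pi) * sqrt lam)"
  proof -
    have "lam * (4 * pi * r) + sqrt lam = (1 + 4*pi) * sqrt lam"
      using lam unfolding r_def by (simp add: field_simps real_sqrt_divide)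
    thus ?thesis using lam r
      by (simp add: ennreal_mult'[symmetric] ennreal_plus[symmetric] del: ennreal_plus)
  qed
  finally show ?thesis .
qed

section \<open>Estimates for the Green's function of the disk\<close>

lemma norm_diff_le_norm_one_minus_mult_cnj:
  fixes x y :: complex assumes "cmod x \<le> 1" "cmod y \<le> 1"
  shows "cmod (x - y) \<le> cmod (1 - x * cnj y)"
proof -
  obtain a b where x: "x = Complex a b" by (cases x)
  obtain c d where y: "y = Complex c d" by (cases y)
  have "(cmod x)^2 \<le> 1" "(cmod y)^2 \<le> 1" using assms by (simp_all add: power_le_one)
  hence "a^2 + b^2 \<le> 1" "c^2 + d^2 \<le> 1" using x y by (simp_all add: cmod_power2)
  hence "0 \<le> (1 - (a^2+b^2)) * (1 - (c^2+d^2))" by (intro mult_nonneg_nonneg) auto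
  also have "\<dots> = (cmod (1 - x * cnj y))^2 - (cmod (x - y))^2"
    unfolding x y cmod_power2 by (simp add: power2_eq_square algebra_simps)
  finally show ?thesis by (simp add: power2_le_iff_abs_le)
qed

lemma abs_ln_diff_le:
  fixes p q :: real assumes "p > 0" "q > 0"
  shows "\<bar>ln p - ln q\<bar> \<le> \<bar>p - q\<bar> * (1/p + 1/q)"
proof -
  have one_sided: "ln a - ln b \<le> \<bar>a - b\<bar> * (1/a + 1/b)" if "a > 0" "b > 0" for a b :: real
  proof -
    have "ln a - ln b = ln (a/b)" using that by (simp add: ln_div)
    also have "\<dots> \<le> a/b - 1" using that by (intro ln_le_minus_one) auto
    also have "\<dots> = (a - b) * (1/b)" using that by (simp add: field_simps)
    also have "\<dots> \<le> \<bar>a - b\<bar> * (1/a + 1/b)" using that by (intro mult_mono) auto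
    finally show ?thesis .
  qed
  show ?thesis using one_sided[OF assms] one_sided[OF assms(2,1)] by (simp add: abs_minus_commute add.commute)
qed

lemma green_disk_nonneg_le:
  fixes x y :: complex assumes "x \<in> unit_disk" "y \<in> unit_disk" "y \<noteq> x"
  shows "0 \<le> green_disk x y" "green_disk x y \<le> 1 / (pi * cmod (x - y))"
proof -
  have nx: "cmod x < 1" and ny: "cmod y < 1" using assms by (auto simp: unit_disk_def)
  define a where "a = cmod (1 - x * cnj y)"
  define b where "b = cmod (x - y)"
  have b: "b > 0" using assms by (simp add: b_def)
  have ab: "b \<le> a" unfolding a_def b_def using nx ny
    by (intro norm_diff_le_norm_one_minus_mult_cnj) auto
  have a2: "a \<le> 2"
  proof -
    have "a \<le> cmod 1 + cmod (x * cnj y)" unfolding a_def by (rule norm_triangle_ineq4)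
    also have "cmod (x * cnj y) \<le> 1" using nx ny by (simp add: norm_mult mult_le_one)
    finally show ?thesis by simp
  qed
  have "ln (a/b) \<ge> 0" using ab b by simp
  thus "0 \<le> green_disk x y" unfolding green_disk_def a_def b_def by simp
  have "ln (a/b) \<le> a/b - 1" using ab b by (intro ln_le_minus_one) auto
  also have "\<dots> \<le> 2 / b" using a2 b divide_right_mono[OF a2, of b] by simp
  finally have "ln (a/b) / (2*pi) \<le> 1 / (pi * b)" by (simp add: field_simps)
  thus "green_disk x y \<le> 1 / (pi * cmod (x - y))" unfolding green_disk_def a_def b_def .
qed

lemma green_disk_diff_le:
  fixes x z y :: complex
  assumes "x \<in> unit_disk" "z \<in> unit_disk" "y \<in> unit_disk" "y \<noteq> x" "y \<noteq> z"
  shows "\<bar>green_disk x y - green_disk z y\<bar>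
    \<le> cmod (x - z) / pi * (1 / cmod (x - y) + 1 / cmod (z - y))"
proof -
  have nx: "cmod x < 1" and nz: "cmod z < 1" and ny: "cmod y < 1"
    using assms by (auto simp: unit_disk_def)
  define ax where "ax = cmod (1 - x * cnj y)"
  define az where "az = cmod (1 - z * cnj y)"
  define bx where "bx = cmod (x - y)"
  define bz where "bz = cmod (z - y)"
  have bx: "bx > 0" and bz: "bz > 0" using assms by (auto simp: bx_def bz_def)
  have abx: "bx \<le> ax" unfolding ax_def bx_def using nx ny
    by (intro norm_diff_le_norm_one_minus_mult_cnj) auto
  have abz: "bz \<le> az" unfolding az_def bz_def using nz ny
    by (intro norm_diff_le_norm_one_minus_mult_cnj) auto
  have ax: "ax > 0" and az: "az > 0" using abx abz bx bz by auto
  have "\<bar>ax - az\<bar> \<le> cmod ((1 - x * cnj y) - (1 - z * cnj y))"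
    unfolding ax_def az_def by (rule norm_triangle_ineq3)
  also have "(1 - x * cnj y) - (1 - z * cnj y) = (z - x) * cnj y" by (simp add: algebra_simps)
  also have "cmod \<dots> \<le> cmod (x - z)"
    using ny by (simp add: norm_mult norm_minus_commute mult_left_le)
  finally have daz: "\<bar>ax - az\<bar> \<le> cmod (x - z)" .
  have "\<bar>bx - bz\<bar> \<le> cmod ((x - y) - (z - y))"
    unfolding bx_def bz_def by (rule norm_triangle_ineq3)
  hence dbz: "\<bar>bx - bz\<bar> \<le> cmod (x - z)" by simp
  have "1/ax + 1/az \<le> 1/bx + 1/bz" using abx abz bx bz by (intro add_mono divide_left_mono) auto
  hence "\<bar>ln ax - ln az\<bar> \<le> cmod (x - z) * (1/bx + 1/bz)"
    using abs_ln_diff_le[OF ax az] daz ax az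
    by (meson abs_ge_zero add_pos_pos divide_pos_pos mult_mono order.trans zero_less_one less_imp_le)
  moreover have "\<bar>ln bx - ln bz\<bar> \<le> cmod (x - z) * (1/bx + 1/bz)"
    using abs_ln_diff_le[OF bx bz] dbz bx bz
    by (meson add_pos_pos divide_pos_pos less_imp_le mult_right_mono order.trans zero_less_one)
  ultimately have "\<bar>(ln ax - ln az) - (ln bx - ln bz)\<bar> / (2*pi)
      \<le> 2 * (cmod (x - z) * (1/bx + 1/bz)) / (2*pi)"
    by (intro divide_right_mono) auto
  moreover have "green_disk x y - green_disk z y = ((ln ax - ln az) - (ln bx - ln bz)) / (2*pi)"
    unfolding green_disk_def ax_def[symmetric] az_def[symmetric] bx_def[symmetric] bz_def[symmetric]
    using ax az bx bz by (simp add: ln_div diff_divide_distrib)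
  ultimately show ?thesis by (simp add: bx_def bz_def)
qed

lemma AE_lebesgue_neq: "AE y in lebesgue. y \<noteq> (c::complex)"
  by (rule AE_completion) (rule AE_lborel_singleton)

section \<open>Lipschitz functions and the quantity \<open>grad_sq\<close>\<close>

lemma lipschitz_on_max_0:
  fixes f :: "'a::metric_space \<Rightarrow> real"
  assumes "L-lipschitz_on U f"
  shows "L-lipschitz_on U (\<lambda>x. max (f x) 0)"
proof (rule lipschitz_onI)
  fix x y assume "x \<in> U" "y \<in> U"
  then have "\<bar>f x - f y\<bar> \<le> L * dist x y" using lipschitz_onD[OF assms] by (simp add: dist_real_def)
  then show "dist (max (f x) 0) (max (f y) 0) \<le> L * dist x y" by (simp add: dist_real_def)
qed (rule lipschitz_on_nonneg[OF assms])

lemma lipschitz_on_norm_square: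
  fixes r :: real assumes "r \<ge> 0"
  shows "(2 * r)-lipschitz_on (cball (0::'a::real_normed_vector) r) (\<lambda>x. (norm x)^2)"
proof (rule lipschitz_onI)
  fix x y :: 'a assume "x \<in> cball 0 r" "y \<in> cball 0 r"
  then have "norm x + norm y \<le> 2 * r" by simp
  moreover have "(norm x)^2 - (norm y)^2 = (norm x - norm y) * (norm x + norm y)"
    by (simp add: power2_eq_square algebra_simps)
  hence "\<bar>(norm x)^2 - (norm y)^2\<bar> = \<bar>norm x - norm y\<bar> * (norm x + norm y)"
    by (simp add: abs_mult)
  ultimately have "\<bar>(norm x)^2 - (norm y)^2\<bar> \<le> norm (x - y) * (2 * r)"
    using norm_triangle_ineq3[of x y] by (simp add: mult_mono)
  then show "dist ((norm x)^2) ((norm y)^2) \<le> 2 * r * dist x y"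
    by (simp add: dist_real_def dist_norm mult.commute)
qed (use assms in simp)

lemma has_real_derivative_along_line:
  fixes f :: "'a::real_normed_vector \<Rightarrow> real"
  assumes "(f has_derivative f') (at x)"
  shows "((\<lambda>t. f (x + t *\<^sub>R v)) has_real_derivative f' v) (at 0)"
proof -
  interpret f': bounded_linear f' using assms by (rule has_derivative_bounded_linear)
  have "((\<lambda>t. x + t *\<^sub>R v) has_derivative (\<lambda>t. t *\<^sub>R v)) (at 0)"
    by (intro derivative_eq_intros) auto
  then have "((\<lambda>t. f (x + t *\<^sub>R v)) has_derivative (\<lambda>t. f' (t *\<^sub>R v))) (at 0)"
    by (rule has_derivative_compose) (simp add: assms)
  then show ?thesis
    unfolding has_field_derivative_def by (simp add: f'.scaleR mult_commute_abs)
qed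

lemma abs_derivative_le_lipschitz:
  fixes f :: "'a::real_normed_vector \<Rightarrow> real"
  assumes deriv: "(f has_derivative f') (at x)" and lip: "L-lipschitz_on U f"
    and U: "open U" "x \<in> U"
  shows "\<bar>f' v\<bar> \<le> L * norm v"
proof -
  define g where "g t = f (x + t *\<^sub>R v)" for t :: real
  have "(g has_real_derivative f' v) (at 0)"
    unfolding g_def by (rule has_real_derivative_along_line[OF deriv])
  hence quotients: "((\<lambda>t. (g t - g 0) / (t - 0)) \<longlongrightarrow> f' v) (at 0)"
    by (simp add: has_field_derivative_iff)
  have "eventually (\<lambda>t. x + t *\<^sub>R v \<in> U) (at (0::real))"
  proof -
    have "isCont (\<lambda>t::real. x + t *\<^sub>R v) 0" by (intro continuous_intros)
    thus ?thesis using U unfolding isCont_def tendsto_def by simp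
  qed
  hence "eventually (\<lambda>t. norm ((g t - g 0) / (t - 0)) \<le> L * norm v) (at (0::real))"
    using eventually_neq_at_within[of 0 0 UNIV]
  proof eventually_elim
    case (elim t)
    have "\<bar>g t - g 0\<bar> \<le> L * norm (t *\<^sub>R v)"
      unfolding g_def using lipschitz_on_normD[OF lip elim(1) \<open>x \<in> U\<close>] by simp
    thus ?case using elim(2) by (auto simp: divide_le_eq mult.commute mult.left_commute)
  qed
  thus ?thesis using tendsto_upperbound[OF tendsto_norm[OF quotients]] by simp
qed

lemma grad_sq_le_lipschitz:
  assumes "L-lipschitz_on U f" "open U" "x \<in> U"
  shows "grad_sq f x \<le> 2 * L^2"
proof (cases "f differentiable (at x)")
  case True
  hence deriv: "(f has_derivative frechet_derivative f (at x)) (at x)"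
    by (simp add: frechet_derivative_works)
  have "(frechet_derivative f (at x) v)^2 \<le> L^2" if "norm v = 1" for v
  proof -
    have "\<bar>frechet_derivative f (at x) v\<bar> \<le> \<bar>L\<bar>"
      using abs_derivative_le_lipschitz[OF deriv assms, of v] that by simp
    then show ?thesis by (simp only: abs_le_square_iff)
  qed
  from this[of 1] this[of \<i>] show ?thesis using True by (simp add: grad_sq_def)
qed (use lipschitz_on_nonneg[OF assms(1)] in \<open>simp add: grad_sq_def\<close>)

lemma grad_sq_eq_0_at_min:
  assumes "\<And>z. f x \<le> f z"
  shows "grad_sq f x = 0"
proof (cases "f differentiable (at x)")
  case True
  then have "(f has_derivative frechet_derivative f (at x)) (at x)"
    by (simp add: frechet_derivative_works)
  then have "frechet_derivative f (at x) = (\<lambda>h. 0)"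
    by (rule has_derivative_local_min) (simp add: assms)
  then show ?thesis by (simp add: grad_sq_def)
qed (simp add: grad_sq_def)

lemma set_integral_le_mult_measure:
  fixes g :: "'a \<Rightarrow> real"
  assumes A: "A \<subseteq> S" "A \<in> sets M" "emeasure M A < \<infinity>" and c: "c \<ge> 0"
    and g: "AE x\<in>S in M. g x \<le> c * indicator A x"
  shows "(LINT x:S|M. g x) \<le> c * measure M A"
proof -
  have restrict: "indicator S x *\<^sub>R (c * indicator A x) = c * indicator A x" for x
    using A(1) by (auto simp: indicator_def)
  have A_int: "set_integrable M S (\<lambda>x. c * indicator A x)"
    unfolding set_integrable_def restrict using A by (intro integrable_mult_right) simp
  show ?thesis
  proof (cases "set_integrable M S g")
    case True
    have "(LINT x:S|M. g x) \<le> (LINT x:S|M. c * indicator A x)"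
      using True A_int g by (rule set_integral_mono_AE)
    also have "\<dots> = c * measure M A"
      unfolding set_lebesgue_integral_def restrict using A by simp
    finally show ?thesis .
  next
    case False
    then have "(LINT x:S|M. g x) = 0"
      unfolding set_lebesgue_integral_def set_integrable_def by (rule not_integrable_integral_eq)
    then show ?thesis using c by simp
  qed
qed

section \<open>Potentials of admissible densities\<close>

locale admissible_density =
  fixes w :: "complex \<Rightarrow> real" and lam :: real
  assumes w_in_K: "w \<in> K_set lam" and lam_gt: "lam > 1 / pi"
begin

lemma lam_pos: "lam > 0"
  using lam_gt by (rule less_trans[rotated]) simp

lemma w_measurable [measurable]: "w \<in> borel_measurable lebesgue"
  and w_bounds: "AE y in lebesgue. y \<in> unit_disk \<longrightarrow> 0 \<le> w y \<and> w y \<le> lam"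
  and w_mass: "(LINT y:unit_disk|lebesgue. w y) = 1"
  using w_in_K by (auto simp: K_set_def)

lemma w_integrable: "set_integrable lebesgue unit_disk w"
  using w_mass not_integrable_integral_eq[of lebesgue "\<lambda>y. indicator unit_disk y *\<^sub>R w y"]
  by (auto simp: set_integrable_def set_lebesgue_integral_def)

lemma
  shows set_integrable_inverse_dist: "set_integrable lebesgue unit_disk (\<lambda>y. w y / cmod (x - y))"
    and set_integral_inverse_dist_le:
      "(LINT y:unit_disk|lebesgue. w y / cmod (x - y)) \<le> (1 + 4*pi) * sqrt lam"
proof -
  have nn: "(\<integral>\<^sup>+ y. ennreal (indicator unit_disk y * (w y / cmod (x - y))) \<partial>lebesgue)
      = (\<integral>\<^sup>+ y. indicator unit_disk y * ennreal (w y / cmod (x - y)) \<partial>lebesgue)"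
    by (intro nn_integral_cong) (simp add: indicator_def)
  have le: "(\<integral>\<^sup>+ y. ennreal (indicator unit_disk y * (w y / cmod (x - y))) \<partial>lebesgue)
      \<le> ennreal ((1 + 4*pi) * sqrt lam)"
    unfolding nn using w_bounds w_integrable w_mass lam_pos
    by (intro nn_integral_bounded_density_inverse_dist_le) auto
  have pos: "AE y in lebesgue. 0 \<le> indicator unit_disk y * (w y / cmod (x - y))"
    using w_bounds by eventually_elim (simp add: indicator_def)
  have int: "integrable lebesgue (\<lambda>y. indicator unit_disk y * (w y / cmod (x - y)))"
    using le pos by (intro integrableI_nonneg) (auto simp: top.not_eq_extremum intro: le_less_trans)
  thus "set_integrable lebesgue unit_disk (\<lambda>y. w y / cmod (x - y))"
    by (simp add: set_integrable_def)
  have "ennreal (\<integral>y. indicator unit_disk y * (w y / cmod (x - y)) \<partial>lebesgue)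
      \<le> ennreal ((1 + 4*pi) * sqrt lam)"
    using le by (subst nn_integral_eq_integral[OF int pos, symmetric])
  thus "(LINT y:unit_disk|lebesgue. w y / cmod (x - y)) \<le> (1 + 4*pi) * sqrt lam"
    using lam_pos by (simp add: set_lebesgue_integral_def)
qed

lemma abs_green_times_density_le:
  assumes "x \<in> unit_disk"
  shows "AE y\<in>unit_disk in lebesgue. \<bar>green_disk x y * w y\<bar> \<le> 1/pi * (w y / cmod (x - y))"
  using w_bounds AE_lebesgue_neq[of x]
proof eventually_elim
  case (elim y)
  show ?case
  proof
    assume y: "y \<in> unit_disk"
    with elim have "0 \<le> w y" by auto
    with green_disk_nonneg_le[OF assms y] elim show
      "\<bar>green_disk x y * w y\<bar> \<le> 1/pi * (w y / cmod (x - y))"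
      using mult_right_mono[of "green_disk x y" "1 / (pi * cmod (x - y))" "w y"] by auto
  qed
qed

lemma set_integrable_green:
  assumes x: "x \<in> unit_disk"
  shows "set_integrable lebesgue unit_disk (\<lambda>y. green_disk x y * w y)"
  unfolding set_integrable_def
proof (rule Bochner_Integration.integrable_bound)
  show "integrable lebesgue (\<lambda>y. indicator unit_disk y *\<^sub>R (1/pi * (w y / cmod (x - y))))"
    using set_integrable_mult_right[OF set_integrable_inverse_dist] unfolding set_integrable_def .
  show "AE y in lebesgue. norm (indicator unit_disk y *\<^sub>R (green_disk x y * w y))
      \<le> norm (indicator unit_disk y *\<^sub>R (1/pi * (w y / cmod (x - y))))"
    using abs_green_times_density_le[OF x]
    by eventually_elim
      (auto simp: indicator_def abs_mult elim!: order.trans intro!: divide_right_mono)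
qed measurable

lemma green_op_le:
  assumes x: "x \<in> unit_disk"
  shows "green_op w x \<le> (1 + 4*pi) * sqrt lam / pi"
proof -
  have "green_op w x \<le> (LINT y:unit_disk|lebesgue. 1/pi * (w y / cmod (x - y)))"
    unfolding green_op_def
    using set_integrable_green[OF x] set_integrable_mult_right[OF set_integrable_inverse_dist[of x]]
    by (rule set_integral_mono_AE) (use abs_green_times_density_le[OF x] in \<open>auto elim: eventually_mono\<close>)
  also have "\<dots> = 1/pi * (LINT y:unit_disk|lebesgue. w y / cmod (x - y))"
    by (rule set_integral_mult_right)
  also have "\<dots> \<le> 1/pi * ((1 + 4*pi) * sqrt lam)"
    using set_integral_inverse_dist_le[of x] by (intro mult_left_mono) auto
  finally show ?thesis by simp
qed

lemma green_op_diff_le: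
  assumes x: "x \<in> unit_disk" and z: "z \<in> unit_disk"
  shows "green_op w x - green_op w z \<le> 2 * (1 + 4*pi) / pi * sqrt lam * dist x z"
proof -
  define k where "k y = cmod (x - z) / pi * (w y / cmod (x - y) + w y / cmod (z - y))" for y
  have k_int: "set_integrable lebesgue unit_disk k"
    unfolding k_def using set_integrable_inverse_dist[of x] set_integrable_inverse_dist[of z]
    by (intro set_integrable_mult_right set_integral_add)
  have "AE y\<in>unit_disk in lebesgue. green_disk x y * w y - green_disk z y * w y \<le> k y"
    using w_bounds AE_lebesgue_neq[of x] AE_lebesgue_neq[of z]
  proof eventually_elim
    case (elim y)
    show ?case
    proof
      assume y: "y \<in> unit_disk"
      with elim have wy: "0 \<le> w y" by auto
      have "green_disk x y * w y - green_disk z y * w y \<le> \<bar>green_disk x y - green_disk z y\<bar> * w y"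
        using wy by (simp add: left_diff_distrib[symmetric] mult_right_mono)
      also have "\<dots> \<le> cmod (x - z) / pi * (1 / cmod (x - y) + 1 / cmod (z - y)) * w y"
        using green_disk_diff_le[OF x z y] elim wy by (intro mult_right_mono) auto
      also have "\<dots> = k y" by (simp add: k_def field_simps)
      finally show "green_disk x y * w y - green_disk z y * w y \<le> k y" .
    qed
  qed
  with set_integral_diff(1)[OF set_integrable_green[OF x] set_integrable_green[OF z]] k_int
  have "(LINT y:unit_disk|lebesgue. green_disk x y * w y - green_disk z y * w y)
      \<le> (LINT y:unit_disk|lebesgue. k y)"
    by (rule set_integral_mono_AE)
  hence "green_op w x - green_op w z \<le> (LINT y:unit_disk|lebesgue. k y)"
    unfolding green_op_def
    using set_integrable_green[OF x] set_integrable_green[OF z] by simp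
  also have "(LINT y:unit_disk|lebesgue. k y) = cmod (x - z) / pi
      * ((LINT y:unit_disk|lebesgue. w y / cmod (x - y)) + (LINT y:unit_disk|lebesgue. w y / cmod (z - y)))"
    unfolding k_def using set_integrable_inverse_dist[of x] set_integrable_inverse_dist[of z]
    by (simp add: set_integral_add)
  also have "\<dots> \<le> cmod (x - z) / pi * ((1 + 4*pi) * sqrt lam + (1 + 4*pi) * sqrt lam)"
    using set_integral_inverse_dist_le[of x] set_integral_inverse_dist_le[of z]
    by (intro mult_left_mono add_mono) auto
  finally show ?thesis by (simp add: dist_norm field_simps)
qed

lemma lipschitz_on_green_op:
  "(2 * (1 + 4*pi) / pi * sqrt lam)-lipschitz_on unit_disk (green_op w)"
proof (rule lipschitz_onI)
  fix x z assume "x \<in> unit_disk" "z \<in> unit_disk"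
  then show "dist (green_op w x) (green_op w z) \<le> 2 * (1 + 4*pi) / pi * sqrt lam * dist x z"
    using green_op_diff_le[of x z] green_op_diff_le[of z x] by (simp add: dist_real_def dist_commute)
qed (simp add: lam_pos less_imp_le)

lemma saturated_sets [measurable]: "{x \<in> unit_disk. lam \<le> w x} \<in> sets lebesgue"
  by measurable

lemma emeasure_saturated_finite: "emeasure lebesgue {x \<in> unit_disk. lam \<le> w x} < \<infinity>"
proof -
  have "emeasure lebesgue {x \<in> unit_disk. lam \<le> w x} \<le> emeasure lebesgue unit_disk"
    by (intro emeasure_mono) auto
  then show ?thesis unfolding emeasure_unit_disk infinity_ennreal_def
    using ennreal_less_top[of pi] by (rule order.strict_trans1)
qed

lemma measure_saturated_le: "measure lebesgue {x \<in> unit_disk. lam \<le> w x} \<le> 1 / lam"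
proof -
  define A where "A = {x \<in> unit_disk. lam \<le> w x}"
  have A: "A \<in> sets lebesgue" "emeasure lebesgue A < \<infinity>"
    unfolding A_def by (simp, rule emeasure_saturated_finite)
  have restrict: "indicator unit_disk x *\<^sub>R (lam * indicator A x) = lam * indicator A x" for x
    by (auto simp: A_def indicator_def)
  have "lam * measure lebesgue A = (LINT y:unit_disk|lebesgue. lam * indicator A y)"
    unfolding set_lebesgue_integral_def restrict using A by simp
  also have "\<dots> \<le> (LINT y:unit_disk|lebesgue. w y)"
  proof (rule set_integral_mono_AE[OF _ w_integrable])
    show "set_integrable lebesgue unit_disk (\<lambda>y. lam * indicator A y)"
      unfolding set_integrable_def restrict using A by (intro integrable_mult_right) simp
    show "AE y\<in>unit_disk in lebesgue. lam * indicator A y \<le> w y"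
      using w_bounds by eventually_elim (auto simp: A_def indicator_def)
  qed
  finally show ?thesis using lam_pos unfolding w_mass A_def by (simp add: field_simps)
qed

text \<open>This is where \<open>\<lambda> > 1/\<pi>\<close> enters: the disk has area \<open>\<pi>\<close>, too much for the saturated set.\<close>

lemma emeasure_unsaturated_ne_0: "emeasure lebesgue {x \<in> unit_disk. w x < lam} \<noteq> 0"
proof
  define A where "A = {x \<in> unit_disk. lam \<le> w x}"
  assume null: "emeasure lebesgue {x \<in> unit_disk. w x < lam} = 0"
  have "ennreal pi \<le> emeasure lebesgue (A \<union> {x \<in> unit_disk. w x < lam})"
    unfolding emeasure_unit_disk[symmetric] A_def by (intro emeasure_mono) auto
  also have "\<dots> \<le> emeasure lebesgue A"
    using emeasure_subadditive[of A lebesgue "{x \<in> unit_disk. w x < lam}"] null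
    by (simp add: A_def)
  also have "\<dots> = ennreal (measure lebesgue A)"
    using emeasure_saturated_finite unfolding A_def by (simp add: emeasure_eq_ennreal_measure)
  finally have "pi \<le> 1 / lam"
    using measure_saturated_le unfolding A_def by simp
  then show False using lam_gt lam_pos by (simp add: field_simps)
qed

lemma psi_nonpos_AE_unsaturated:
  "AE x in lebesgue. x \<in> unit_disk \<and> w x < lam \<longrightarrow> psi Om lam w x \<le> 0"
proof -
  define S where "S = {x \<in> unit_disk. w x < lam}"
  define f where "f x = ereal (green_op w x + Om/2 * (cmod x)^2)" for x
  let ?M = "restrict_space lebesgue S"
  have S_sets [measurable]: "S \<in> sets lebesgue" unfolding S_def by measurable
  have "continuous_on S (\<lambda>x. green_op w x + Om/2 * (cmod x)^2)"
    using continuous_on_subset[OF lipschitz_on_continuous_on[OF lipschitz_on_green_op], of S]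
    by (intro continuous_intros) (auto simp: S_def)
  hence f_measurable: "f \<in> borel_measurable ?M"
    unfolding f_def using continuous_imp_measurable_on_sets_lebesgue[OF _ S_sets] by measurable
  have "esssup ?M f \<le> ereal ((1 + 4*pi) * sqrt lam / pi + \<bar>Om\<bar>/2)"
  proof (rule esssup_I[OF f_measurable], rule AE_I2)
    fix x assume "x \<in> space ?M"
    hence x: "x \<in> unit_disk" by (simp add: S_def)
    hence "(cmod x)^2 \<le> 1" by (simp add: unit_disk_def power_le_one)
    hence "Om/2 * (cmod x)^2 \<le> \<bar>Om\<bar>/2 * 1"
      by (intro mult_mono) auto
    thus "f x \<le> ereal ((1 + 4*pi) * sqrt lam / pi + \<bar>Om\<bar>/2)"
      using green_op_le[OF x] unfolding f_def by simp
  qed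
  moreover have "esssup ?M f \<noteq> - \<infinity>"
  proof
    assume "esssup ?M f = - \<infinity>"
    hence "AE x in ?M. False" using esssup_AE[of f ?M] by (simp add: f_def)
    hence "ae_filter ?M = bot" by (simp add: trivial_limit_def)
    hence "emeasure ?M (space ?M) = 0" by (simp add: ae_filter_eq_bot_iff)
    thus False
      using emeasure_unsaturated_ne_0 by (simp add: emeasure_restrict_space S_def)
  qed
  ultimately have mu: "esssup ?M f = ereal (mu_val Om lam w)"
    unfolding mu_val_def S_def[symmetric] f_def[symmetric] by (cases "esssup ?M f") auto
  have "AE x in lebesgue. x \<in> S \<longrightarrow> f x \<le> esssup ?M f"
    using esssup_AE[of f ?M] by (subst (asm) AE_restrict_space_iff) auto
  thus ?thesis unfolding mu by (rule eventually_mono) (auto simp: S_def f_def psi_def)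
qed

lemma lipschitz_on_psi:
  "(2 * (1 + 4*pi) / pi * sqrt lam + \<bar>Om\<bar>)-lipschitz_on unit_disk (psi Om lam w)"
proof -
  have "(2 * 1)-lipschitz_on unit_disk (\<lambda>x. (cmod x)^2)"
    unfolding unit_disk_def
    by (rule lipschitz_on_subset[OF lipschitz_on_norm_square ball_subset_cball]) simp
  from lipschitz_on_add[OF lipschitz_on_green_op lipschitz_on_cmult_real[OF this, of "Om/2"]]
  have "(2 * (1 + 4*pi) / pi * sqrt lam + \<bar>Om\<bar> + 0)-lipschitz_on unit_disk
      (\<lambda>x. green_op w x + Om/2 * (cmod x)^2 - mu_val Om lam w)"
    by (intro lipschitz_on_diff lipschitz_on_constant) simp
  then show ?thesis by (simp add: psi_def[abs_def])
qed

lemma kinetic_le: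
  "kinetic Om lam w \<le> (2 * (1 + 4*pi) / pi * sqrt lam + \<bar>Om\<bar>)^2 / lam"
proof -
  define L where "L = 2 * (1 + 4*pi) / pi * sqrt lam + \<bar>Om\<bar>"
  define A where "A = {x \<in> unit_disk. lam \<le> w x}"
  have lip: "L-lipschitz_on unit_disk (\<lambda>y. max (psi Om lam w y) 0)"
    unfolding L_def by (intro lipschitz_on_max_0 lipschitz_on_psi)
  have "AE x\<in>unit_disk in lebesgue.
      grad_sq (\<lambda>y. max (psi Om lam w y) 0) x \<le> 2 * L^2 * indicator A x"
    using psi_nonpos_AE_unsaturated[of Om]
  proof eventually_elim
    case (elim x)
    show ?case
    proof
      assume x: "x \<in> unit_disk"
      show "grad_sq (\<lambda>y. max (psi Om lam w y) 0) x \<le> 2 * L^2 * indicator A x"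
      proof (cases "x \<in> A")
        case False
        with elim x have "grad_sq (\<lambda>y. max (psi Om lam w y) 0) x = 0"
          by (intro grad_sq_eq_0_at_min) (auto simp: A_def)
        thus ?thesis by simp
      qed (use grad_sq_le_lipschitz[OF lip _ x] in \<open>simp add: unit_disk_def\<close>)
    qed
  qed
  hence "(LINT x:unit_disk|lebesgue. grad_sq (\<lambda>y. max (psi Om lam w y) 0) x)
      \<le> 2 * L^2 * measure lebesgue A"
    using emeasure_saturated_finite unfolding A_def
    by (intro set_integral_le_mult_measure) auto
  also have "\<dots> \<le> 2 * L^2 * (1 / lam)"
    using measure_saturated_le unfolding A_def by (intro mult_left_mono) auto
  finally show ?thesis unfolding kinetic_def L_def[symmetric] by (simp add: mult.commute)
qed

end

theorem lemma2p7:
  fixes Om :: real and W :: "real \<Rightarrow> complex \<Rightarrow> real"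
  assumes "Om > 0"
    and "\<And>lam. lam > 1 / pi \<Longrightarrow> is_maximizer Om lam (W lam)"
  shows "\<exists>C. \<exists>L. \<forall>lam \<ge> L. kinetic Om lam (W lam) \<le> C"
proof -
  define c where "c = 2 * (1 + 4*pi) / pi"
  have "kinetic Om lam (W lam) \<le> (c + \<bar>Om\<bar>)^2" if lam: "lam \<ge> 1" for lam
  proof -
    have "1 / pi < 1" using pi_gt3 by simp
    with lam have "lam > 1 / pi" by linarith
    then interpret admissible_density "W lam" lam
      using assms(2) by unfold_locales (simp_all add: is_maximizer_def)
    have "\<bar>Om\<bar> * 1 \<le> \<bar>Om\<bar> * sqrt lam" using lam by (intro mult_left_mono) auto
    hence "c * sqrt lam + \<bar>Om\<bar> \<le> (c + \<bar>Om\<bar>) * sqrt lam" by (simp add: distrib_right)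
    hence "(c * sqrt lam + \<bar>Om\<bar>)^2 / lam \<le> ((c + \<bar>Om\<bar>) * sqrt lam)^2 / lam"
      using lam unfolding c_def by (intro divide_right_mono power_mono) auto
    also have "\<dots> = (c + \<bar>Om\<bar>)^2"
      using lam by (simp add: power_mult_distrib)
    finally show ?thesis using kinetic_le[of Om] unfolding c_def by linarith
  qed
  then show ?thesis by blast
qed

end
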